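(* Let $\alpha>0$, $\Omega=[0,1]^3$, and let $\boldsymbol m=(m_1,m_2,m_3)$ be a solution of $$\partial_t\boldsymbol m=-\boldsymbol m\times\Delta\boldsymbol m+\alpha\Delta\boldsymbol m+\alpha|\nabla\boldsymbol m|^2\boldsymbol m\ \text{ in }\Omega\times(0,T],\qquad\partial_{\mathbf n}\boldsymbol m=0\ \text{ on }\partial\Omega,$$ which is smooth up to the boundary (in particular $C^3$ in space up to $\partial\Omega$ with $\partial_z\partial_t\boldsymbol m$ continuous up to the boundary) and satisfies $|\boldsymbol m|=1$. Then $\partial_z^3\boldsymbol m=0$ on the boundary face $\{z=0\}$ (and analogously $\partial_x^3\boldsymbol m=0$ on $\{x=0\},\{x=1\}$, etc.). Consequently, for $h>0$ small and any fixed $x,y$, $\boldsymbol m(x,y,-\tfrac h2,t)=\boldsymbol m(x,y,\tfrac h2,t)+\mathcal O(h^5)$, where $\boldsymbol m$ is smoothly extended beyond the boundary.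
   Context: $|\nabla\boldsymbol m|^2=\sum_{i=1}^3|\nabla m_i|^2$; $\mathbf n$ is the outward unit normal. *)

theory Defs
  imports "HOL-Analysis.Analysis" "HOL-Library.Landau_Symbols"
begin

fun Ck_on :: "nat \<Rightarrow> 'a::real_normed_vector set \<Rightarrow> ('a \<Rightarrow> 'b::real_normed_vector) \<Rightarrow> bool" where
  "Ck_on 0 U f = continuous_on U f"
| "Ck_on (Suc k) U f =
     (\<exists>f'. (\<forall>x\<in>U. (f has_derivative f' x) (at x)) \<and> (\<forall>v. Ck_on k U (\<lambda>x. f' x v)))"

definition smooth_on :: "'a::real_normed_vector set \<Rightarrow> ('a \<Rightarrow> 'b::real_normed_vector) \<Rightarrow> bool" where
  "smooth_on U f \<longleftrightarrow> (\<forall>k. Ck_on k U f)"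

type_synonym field4 = "real \<Rightarrow> real \<Rightarrow> real \<Rightarrow> real \<Rightarrow> real^3"

definition dX :: "field4 \<Rightarrow> field4" where
  "dX m = (\<lambda>x y z t. vector_derivative (\<lambda>s. m s y z t) (at x))"
definition dY :: "field4 \<Rightarrow> field4" where
  "dY m = (\<lambda>x y z t. vector_derivative (\<lambda>s. m x s z t) (at y))"
definition dZ :: "field4 \<Rightarrow> field4" where
  "dZ m = (\<lambda>x y z t. vector_derivative (\<lambda>s. m x y s t) (at z))"
definition dT :: "field4 \<Rightarrow> field4" where
  "dT m = (\<lambda>x y z t. vector_derivative (\<lambda>s. m x y z s) (at t))"

definition lap :: "field4 \<Rightarrow> field4" where
  "lap m = (\<lambda>x y z t. dX (dX m) x y z t + dY (dY m) x y z t + dZ (dZ m) x y z t)"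

definition grad_sq :: "field4 \<Rightarrow> real \<Rightarrow> real \<Rightarrow> real \<Rightarrow> real \<Rightarrow> real" where
  "grad_sq m = (\<lambda>x y z t. (norm (dX m x y z t))\<^sup>2 + (norm (dY m x y z t))\<^sup>2 + (norm (dZ m x y z t))\<^sup>2)"

definition unit_cube :: "(real \<times> real \<times> real) set" where
  "unit_cube = {0..1} \<times> {0..1} \<times> {0..1}"

end

theory Submission
  imports Defs
begin

(* Differentiate the equation in the normal direction at the face z = 0. Because m_z = 0 on
   the face, so are its tangential derivatives, and since mixed partials commute this gives
   m_zx = m_zy = m_zt = m_zxx = m_zyy = 0 there. Hence the z-derivatives of m, of |grad m|^2
   and of m_xx + m_yy vanish on the face, and differentiating the equation leaves
   0 = alpha v - m /\ v with v = m_zzz. Taking the inner product with v gives alpha |v|^2 = 0.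
   The other faces follow by exchanging coordinates.
   For the expansion, the odd part m(z) - m(-z) has vanishing derivatives of orders 0..4 at
   z = 0 (the odd ones are m_z and m_zzz), so repeated mean value estimates make it O(z^5). *)

lemma Ck_on_cong:
  assumes "open U" "\<forall>x\<in>U. f x = g x" "Ck_on k U f"
  shows "Ck_on k U g"
  using assms
proof (induction k arbitrary: f g)
  case 0
  then show ?case using continuous_on_cong[of U U f g] by simp
next
  case (Suc k)
  then obtain f' where f': "\<forall>x\<in>U. (f has_derivative f' x) (at x)" "\<forall>v. Ck_on k U (\<lambda>x. f' x v)"
    by (simp only: Ck_on.simps) blast
  have "\<forall>x\<in>U. (g has_derivative f' x) (at x)"
  proof
    fix x assume "x \<in> U"
    then show "(g has_derivative f' x) (at x)"
      using has_derivative_transform_within_open[of f "f' x" x UNIV U g] f'(1) Suc.prems by auto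
  qed
  then show ?case using f'(2) by (simp only: Ck_on.simps) blast
qed

lemma smooth_on_cong:
  "open U \<Longrightarrow> \<forall>x\<in>U. f x = g x \<Longrightarrow> smooth_on U f \<Longrightarrow> smooth_on U g"
  unfolding smooth_on_def using Ck_on_cong by blast

lemma smooth_on_imp_continuous_on: "smooth_on U f \<Longrightarrow> continuous_on U f"
  unfolding smooth_on_def by (metis Ck_on.simps(1))

lemma smooth_on_has_derivative:
  assumes "smooth_on U f" "x \<in> U"
  shows "(f has_derivative frechet_derivative f (at x)) (at x)"
proof -
  have "Ck_on (Suc 0) U f" using assms unfolding smooth_on_def by blast
  then obtain f' where "\<forall>x\<in>U. (f has_derivative f' x) (at x)" by (simp only: Ck_on.simps) blast
  then show ?thesis using assms(2) frechet_derivative_at by metis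
qed

lemma Ck_on_compose_linear:
  assumes P: "bounded_linear P" and "Ck_on k U f"
  shows "Ck_on k (P -` U) (f \<circ> P)"
  using assms(2)
proof (induction k arbitrary: f)
  case 0
  have "continuous_on (P ` (P -` U)) f"
    using 0 continuous_on_subset[of U f "P ` (P -` U)"] by auto
  then show ?case using continuous_on_compose[OF linear_continuous_on[OF P, of "P -` U"]] by simp
next
  case (Suc k)
  then obtain f' where f': "\<forall>x\<in>U. (f has_derivative f' x) (at x)" "\<forall>v. Ck_on k U (\<lambda>x. f' x v)"
    by (simp only: Ck_on.simps) blast
  have "\<forall>x\<in>P -` U. ((f \<circ> P) has_derivative (f' (P x) \<circ> P)) (at x)"
    using diff_chain_at[OF bounded_linear_imp_has_derivative[OF P]] f'(1) by auto
  moreover have "\<forall>v. Ck_on k (P -` U) (\<lambda>x. (f' (P x) \<circ> P) v)"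
  proof
    fix v
    have "Ck_on k (P -` U) ((\<lambda>y. f' y (P v)) \<circ> P)" using Suc.IH f'(2) by blast
    then show "Ck_on k (P -` U) (\<lambda>x. (f' (P x) \<circ> P) v)" by (simp add: o_def)
  qed
  ultimately show ?case
    unfolding Ck_on.simps by (intro exI[of _ "\<lambda>x. f' (P x) \<circ> P"]) blast
qed

lemma smooth_on_compose_linear:
  "bounded_linear P \<Longrightarrow> smooth_on U f \<Longrightarrow> smooth_on (P -` U) (f \<circ> P)"
  unfolding smooth_on_def using Ck_on_compose_linear by blast

definition dir_deriv :: "'a::real_normed_vector \<Rightarrow> ('a \<Rightarrow> 'b::real_normed_vector) \<Rightarrow> 'a \<Rightarrow> 'b" where
  "dir_deriv v f p = frechet_derivative f (at p) v"

lemma smooth_on_dir_deriv: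
  assumes "open U" "smooth_on U f"
  shows "smooth_on U (dir_deriv v f)"
  unfolding smooth_on_def
proof
  fix k
  have "Ck_on (Suc k) U f" using assms unfolding smooth_on_def by blast
  then obtain f' where f': "\<forall>x\<in>U. (f has_derivative f' x) (at x)" "\<forall>v. Ck_on k U (\<lambda>x. f' x v)"
    by (simp only: Ck_on.simps) blast
  have "\<forall>x\<in>U. f' x v = dir_deriv v f x"
    using f'(1) frechet_derivative_at unfolding dir_deriv_def by metis
  from Ck_on_cong[OF assms(1) this f'(2)[rule_format, of v]]
  show "Ck_on k U (dir_deriv v f)" .
qed

lemma smooth_on_eq_dir_deriv:
  assumes "open U" "smooth_on U f" "\<And>q. q \<in> U \<Longrightarrow> g q = dir_deriv e f q"
  shows "smooth_on U g"
  by (rule smooth_on_cong[OF assms(1) _ smooth_on_dir_deriv[OF assms(1,2), of e]]) (simp add: assms(3))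

lemma has_vector_derivative_dir_deriv:
  assumes "smooth_on U f" "p \<in> U"
  shows "((\<lambda>s. f (p + (s - c) *\<^sub>R e)) has_vector_derivative dir_deriv e f p) (at c)"
proof -
  have line: "((\<lambda>s. p + (s - c) *\<^sub>R e) has_derivative (\<lambda>h. h *\<^sub>R e)) (at c)"
    by (auto intro!: derivative_eq_intros simp: algebra_simps)
  have "(f has_derivative frechet_derivative f (at p)) (at (p + (c - c) *\<^sub>R e))"
    using smooth_on_has_derivative[OF assms] by simp
  from diff_chain_at[OF line this] show ?thesis
    using has_derivative_bounded_linear[OF smooth_on_has_derivative[OF assms]]
    unfolding has_vector_derivative_def dir_deriv_def by (simp add: o_def linear_simps)
qed

lemma dir_deriv_cong:
  assumes "open U" "p \<in> U" "\<forall>q\<in>U. f q = g q" "smooth_on U g"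
  shows "dir_deriv v f p = dir_deriv v g p"
proof -
  have "(f has_derivative frechet_derivative g (at p)) (at p)"
    using has_derivative_transform_within_open[of g _ p UNIV U f] smooth_on_has_derivative assms
    by auto
  then show ?thesis unfolding dir_deriv_def using frechet_derivative_at by metis
qed

lemma open_contains_plane_square:
  fixes p a b :: "'a::real_normed_vector"
  assumes "open U" "p \<in> U"
  obtains r where "r > 0" "\<And>s u. \<bar>s\<bar> < r \<Longrightarrow> \<bar>u\<bar> < r \<Longrightarrow> p + s *\<^sub>R a + u *\<^sub>R b \<in> U"
proof -
  obtain e where e: "e > 0" "ball p e \<subseteq> U" using assms open_contains_ball by blast
  define r where "r = e / (norm a + norm b + 1)"
  have norms: "norm a + norm b + 1 > 0" by (simp add: add_nonneg_pos)
  then have "r > 0" using e by (simp add: r_def)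
  have "p + s *\<^sub>R a + u *\<^sub>R b \<in> U" if "\<bar>s\<bar> < r" "\<bar>u\<bar> < r" for s u
  proof -
    have "norm (s *\<^sub>R a + u *\<^sub>R b) \<le> \<bar>s\<bar> * norm a + \<bar>u\<bar> * norm b"
      by (metis norm_scaleR norm_triangle_ineq)
    also have "\<dots> \<le> r * norm a + r * norm b"
      using that by (intro add_mono mult_right_mono) auto
    also have "\<dots> < r * (norm a + norm b + 1)" using \<open>r > 0\<close> by (simp add: algebra_simps)
    also have "\<dots> = e" unfolding r_def using norms by simp
    finally have "dist p (p + s *\<^sub>R a + u *\<^sub>R b) < e"
      using norm_minus_cancel[of "s *\<^sub>R a + u *\<^sub>R b"] by (simp add: dist_norm algebra_simps)
    then show ?thesis using e(2) by auto
  qed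
  with \<open>r > 0\<close> show ?thesis using that by blast
qed

lemma second_difference_mean_value:
  fixes g ga gab :: "real \<Rightarrow> real \<Rightarrow> real"
  assumes h: "0 < h"
    and da: "\<And>a b. a \<in> {0..h} \<Longrightarrow> b \<in> {0..h} \<Longrightarrow> ((\<lambda>s. g s b) has_real_derivative ga a b) (at a)"
    and dab: "\<And>a b. a \<in> {0..h} \<Longrightarrow> b \<in> {0..h} \<Longrightarrow> ((\<lambda>s. ga a s) has_real_derivative gab a b) (at b)"
  obtains \<xi> \<eta> where "\<xi> \<in> {0<..<h}" "\<eta> \<in> {0<..<h}" "g h h - g h 0 - g 0 h + g 0 0 = h * h * gab \<xi> \<eta>"
proof -
  have "((\<lambda>s. g s h - g s 0) has_real_derivative ga a h - ga a 0) (at a)" if "0 \<le> a" "a \<le> h" for a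
    using h that by (intro DERIV_diff da) auto
  from MVT2[OF h this] obtain \<xi> where \<xi>: "0 < \<xi>" "\<xi> < h"
      "g h h - g h 0 - g 0 h + g 0 0 = h * (ga \<xi> h - ga \<xi> 0)"
    by (auto simp: algebra_simps)
  have "((\<lambda>s. ga \<xi> s) has_real_derivative gab \<xi> b) (at b)" if "0 \<le> b" "b \<le> h" for b
    using \<xi> that by (intro dab) auto
  from MVT2[OF h this] obtain \<eta> where "0 < \<eta>" "\<eta> < h" "ga \<xi> h - ga \<xi> 0 = h * gab \<xi> \<eta>"
    by auto
  with \<xi> show ?thesis using that by auto
qed

lemma mixed_partials_eq:
  fixes g ga gb gab gba :: "real \<Rightarrow> real \<Rightarrow> real"
  assumes r: "r > 0"
    and da: "\<And>a b. \<bar>a\<bar> < r \<Longrightarrow> \<bar>b\<bar> < r \<Longrightarrow> ((\<lambda>s. g s b) has_real_derivative ga a b) (at a)"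
    and db: "\<And>a b. \<bar>a\<bar> < r \<Longrightarrow> \<bar>b\<bar> < r \<Longrightarrow> ((\<lambda>s. g a s) has_real_derivative gb a b) (at b)"
    and dab: "\<And>a b. \<bar>a\<bar> < r \<Longrightarrow> \<bar>b\<bar> < r \<Longrightarrow> ((\<lambda>s. ga a s) has_real_derivative gab a b) (at b)"
    and dba: "\<And>a b. \<bar>a\<bar> < r \<Longrightarrow> \<bar>b\<bar> < r \<Longrightarrow> ((\<lambda>s. gb s b) has_real_derivative gba a b) (at a)"
    and cab: "isCont (\<lambda>z. gab (fst z) (snd z)) (0, 0)"
    and cba: "isCont (\<lambda>z. gba (fst z) (snd z)) (0, 0)"
  shows "gab 0 0 = gba 0 0"
proof (rule ccontr)
  assume ne: "gab 0 0 \<noteq> gba 0 0"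
  define \<epsilon> where "\<epsilon> = \<bar>gab 0 0 - gba 0 0\<bar> / 2"
  have "\<epsilon> > 0" using ne by (simp add: \<epsilon>_def)
  obtain d1 where d1: "d1 > 0" "\<forall>z. dist z (0, 0) < d1 \<longrightarrow> dist (gab (fst z) (snd z)) (gab 0 0) < \<epsilon>"
    using cab[unfolded continuous_at_eps_delta] \<open>\<epsilon> > 0\<close> by fastforce
  obtain d2 where d2: "d2 > 0" "\<forall>z. dist z (0, 0) < d2 \<longrightarrow> dist (gba (fst z) (snd z)) (gba 0 0) < \<epsilon>"
    using cba[unfolded continuous_at_eps_delta] \<open>\<epsilon> > 0\<close> by fastforce
  define h where "h = min r (min d1 d2) / 3"
  have h: "0 < h" "h < r" "2 * h < d1" "2 * h < d2" using r d1 d2 by (auto simp: h_def)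
  have near: "dist (s, u) (0, 0) < 2 * h" if "s \<in> {0<..<h}" "u \<in> {0<..<h}" for s u
  proof -
    have "dist (s, u) (0, 0) \<le> \<bar>s\<bar> + \<bar>u\<bar>"
      using sqrt_sum_squares_le_sum_abs[of s u] by (simp add: dist_Pair_Pair dist_real_def)
    then show ?thesis using that by auto
  qed
  have inr: "\<bar>a\<bar> < r" if "a \<in> {0..h}" for a using that h by auto
  obtain \<xi> \<eta> where \<xi>\<eta>: "\<xi> \<in> {0<..<h}" "\<eta> \<in> {0<..<h}" "g h h - g h 0 - g 0 h + g 0 0 = h * h * gab \<xi> \<eta>"
    using second_difference_mean_value[of h g ga gab, OF h(1) da[OF inr inr] dab[OF inr inr]] .
  obtain \<zeta> \<theta> where \<zeta>\<theta>: "\<zeta> \<in> {0<..<h}" "\<theta> \<in> {0<..<h}" "g h h - g 0 h - g h 0 + g 0 0 = h * h * gba \<theta> \<zeta>"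
    using second_difference_mean_value[of h "\<lambda>a b. g b a" "\<lambda>a b. gb b a" "\<lambda>a b. gba b a",
        OF h(1) db[OF inr inr] dba[OF inr inr]] by blast
  have "h * h * gab \<xi> \<eta> = h * h * gba \<theta> \<zeta>" using \<xi>\<eta>(3) \<zeta>\<theta>(3) by linarith
  then have "gab \<xi> \<eta> = gba \<theta> \<zeta>" using h(1) by simp
  moreover have "dist (gab \<xi> \<eta>) (gab 0 0) < \<epsilon>"
    using d1(2)[rule_format, of "(\<xi>, \<eta>)"] near[OF \<xi>\<eta>(1,2)] h(3) by simp
  moreover have "dist (gba \<theta> \<zeta>) (gba 0 0) < \<epsilon>"
    using d2(2)[rule_format, of "(\<theta>, \<zeta>)"] near[OF \<zeta>\<theta>(2,1)] h(4) by simp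
  ultimately have "\<bar>gab 0 0 - gba 0 0\<bar> < 2 * \<epsilon>" by (auto simp: dist_real_def)
  then show False by (simp add: \<epsilon>_def)
qed

lemma has_real_derivative_dir_deriv_component:
  fixes f :: "'a::real_normed_vector \<Rightarrow> real^'n"
  assumes "smooth_on U f" "q \<in> U"
  shows "((\<lambda>s. f (q + (s - c) *\<^sub>R e) $ i) has_real_derivative dir_deriv e f q $ i) (at c)"
  unfolding has_real_derivative_iff_has_vector_derivative
  using bounded_linear.has_vector_derivative[OF bounded_linear_vec_nth has_vector_derivative_dir_deriv[OF assms]] .

lemma dir_deriv_commute:
  fixes f :: "'a::real_normed_vector \<Rightarrow> real^'n"
  assumes U: "open U" and f: "smooth_on U f" and p: "p \<in> U"
  shows "dir_deriv a (dir_deriv b f) p = dir_deriv b (dir_deriv a f) p"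
proof -
  obtain r where r: "r > 0" "\<And>s u. \<bar>s\<bar> < r \<Longrightarrow> \<bar>u\<bar> < r \<Longrightarrow> p + s *\<^sub>R a + u *\<^sub>R b \<in> U"
    using open_contains_plane_square[OF U p] by blast
  define P where "P s u = p + s *\<^sub>R a + u *\<^sub>R b" for s u
  have deriv_a: "((\<lambda>s'. G (P s' u) $ i) has_real_derivative dir_deriv a G (P s u) $ i) (at s)"
    and deriv_b: "((\<lambda>u'. G (P s u') $ i) has_real_derivative dir_deriv b G (P s u) $ i) (at u)"
    if "smooth_on U G" "\<bar>s\<bar> < r" "\<bar>u\<bar> < r" for G :: "'a \<Rightarrow> real^'n" and s u i
  proof -
    have PU: "P s u \<in> U" using r(2)[OF that(2,3)] by (simp add: P_def)
    have "(\<lambda>s'. G (P s' u) $ i) = (\<lambda>s'. G (P s u + (s' - s) *\<^sub>R a) $ i)"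
      "(\<lambda>u'. G (P s u') $ i) = (\<lambda>u'. G (P s u + (u' - u) *\<^sub>R b) $ i)"
      by (simp_all add: P_def algebra_simps)
    then show "((\<lambda>s'. G (P s' u) $ i) has_real_derivative dir_deriv a G (P s u) $ i) (at s)"
      "((\<lambda>u'. G (P s u') $ i) has_real_derivative dir_deriv b G (P s u) $ i) (at u)"
      using has_real_derivative_dir_deriv_component[OF that(1) PU] by simp_all
  qed
  have cont: "isCont (\<lambda>z. G (P (fst z) (snd z)) $ i) (0, 0)" if "smooth_on U G" for G :: "'a \<Rightarrow> real^'n" and i
  proof -
    have "isCont G p"
      using smooth_on_imp_continuous_on[OF that] U p continuous_on_eq_continuous_at by blast
    then have "isCont G (P (fst (0::real, 0::real)) (snd (0::real, 0::real)))" by (simp add: P_def)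
    moreover have "isCont (\<lambda>z::real \<times> real. P (fst z) (snd z)) (0, 0)"
      unfolding P_def by (intro continuous_intros)
    ultimately show ?thesis by (intro continuous_intros) (rule isCont_o2)
  qed
  note smooth = smooth_on_dir_deriv[OF U] f
  have "dir_deriv b (dir_deriv a f) (P 0 0) $ i = dir_deriv a (dir_deriv b f) (P 0 0) $ i" for i
    by (rule mixed_partials_eq[where g = "\<lambda>s u. f (P s u) $ i"
          and ga = "\<lambda>s u. dir_deriv a f (P s u) $ i" and gb = "\<lambda>s u. dir_deriv b f (P s u) $ i",
          OF r(1) deriv_a deriv_b deriv_b deriv_a cont cont])
      (use smooth in auto)
  then show ?thesis by (simp add: P_def vec_eq_iff)
qed

abbreviation uncurry4 :: "field4 \<Rightarrow> real \<times> real \<times> real \<times> real \<Rightarrow> real^3" where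
  "uncurry4 m \<equiv> (\<lambda>(x, y, z, t). m x y z t)"

lemma has_vector_derivative_along_axes:
  assumes "smooth_on U (uncurry4 m)" "(x, y, z, t) \<in> U"
  shows "((\<lambda>s. m s y z t) has_vector_derivative dir_deriv (1, 0, 0, 0) (uncurry4 m) (x, y, z, t)) (at x)"
    and "((\<lambda>s. m x s z t) has_vector_derivative dir_deriv (0, 1, 0, 0) (uncurry4 m) (x, y, z, t)) (at y)"
    and "((\<lambda>s. m x y s t) has_vector_derivative dir_deriv (0, 0, 1, 0) (uncurry4 m) (x, y, z, t)) (at z)"
    and "((\<lambda>s. m x y z s) has_vector_derivative dir_deriv (0, 0, 0, 1) (uncurry4 m) (x, y, z, t)) (at t)"
  using has_vector_derivative_dir_deriv[OF assms, where c = x and e = "(1, 0, 0, 0)"]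
    has_vector_derivative_dir_deriv[OF assms, where c = y and e = "(0, 1, 0, 0)"]
    has_vector_derivative_dir_deriv[OF assms, where c = z and e = "(0, 0, 1, 0)"]
    has_vector_derivative_dir_deriv[OF assms, where c = t and e = "(0, 0, 0, 1)"]
  by simp_all

lemma partials_eq_dir_deriv:
  assumes "smooth_on U (uncurry4 m)" "q \<in> U"
  shows "uncurry4 (dX m) q = dir_deriv (1, 0, 0, 0) (uncurry4 m) q"
    and "uncurry4 (dY m) q = dir_deriv (0, 1, 0, 0) (uncurry4 m) q"
    and "uncurry4 (dZ m) q = dir_deriv (0, 0, 1, 0) (uncurry4 m) q"
    and "uncurry4 (dT m) q = dir_deriv (0, 0, 0, 1) (uncurry4 m) q"
proof -
  obtain x y z t where q: "q = (x, y, z, t)" by (cases q)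
  note d = has_vector_derivative_along_axes[OF assms(1) assms(2)[unfolded q]]
  show "uncurry4 (dX m) q = dir_deriv (1, 0, 0, 0) (uncurry4 m) q"
    "uncurry4 (dY m) q = dir_deriv (0, 1, 0, 0) (uncurry4 m) q"
    "uncurry4 (dZ m) q = dir_deriv (0, 0, 1, 0) (uncurry4 m) q"
    "uncurry4 (dT m) q = dir_deriv (0, 0, 0, 1) (uncurry4 m) q"
    using d[THEN vector_derivative_at] by (simp_all add: q dX_def dY_def dZ_def dT_def)
qed

lemma partials_has_vector_derivative:
  assumes "smooth_on U (uncurry4 m)" "(x, y, z, t) \<in> U"
  shows "((\<lambda>s. m s y z t) has_vector_derivative dX m x y z t) (at x)"
    and "((\<lambda>s. m x s z t) has_vector_derivative dY m x y z t) (at y)"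
    and "((\<lambda>s. m x y s t) has_vector_derivative dZ m x y z t) (at z)"
    and "((\<lambda>s. m x y z s) has_vector_derivative dT m x y z t) (at t)"
  using has_vector_derivative_along_axes[OF assms] partials_eq_dir_deriv[OF assms] by simp_all

lemma smooth_on_partials:
  assumes U: "open U" and m: "smooth_on U (uncurry4 m)"
  shows "smooth_on U (uncurry4 (dX m))" and "smooth_on U (uncurry4 (dY m))"
    and "smooth_on U (uncurry4 (dZ m))" and "smooth_on U (uncurry4 (dT m))"
  using smooth_on_eq_dir_deriv[OF U m partials_eq_dir_deriv(1)[OF m]]
    smooth_on_eq_dir_deriv[OF U m partials_eq_dir_deriv(2)[OF m]]
    smooth_on_eq_dir_deriv[OF U m partials_eq_dir_deriv(3)[OF m]]
    smooth_on_eq_dir_deriv[OF U m partials_eq_dir_deriv(4)[OF m]]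
  by simp_all

lemma partials_commute:
  assumes U: "open U" and g: "smooth_on U (uncurry4 g)" and p: "p \<in> U"
    and A: "\<And>h q. smooth_on U (uncurry4 h) \<Longrightarrow> q \<in> U \<Longrightarrow> uncurry4 (A h) q = dir_deriv a (uncurry4 h) q"
    and B: "\<And>h q. smooth_on U (uncurry4 h) \<Longrightarrow> q \<in> U \<Longrightarrow> uncurry4 (B h) q = dir_deriv b (uncurry4 h) q"
  shows "uncurry4 (A (B g)) p = uncurry4 (B (A g)) p"
proof -
  have Ag: "smooth_on U (uncurry4 (A g))" by (rule smooth_on_eq_dir_deriv[OF U g A[OF g]])
  have Bg: "smooth_on U (uncurry4 (B g))" by (rule smooth_on_eq_dir_deriv[OF U g B[OF g]])
  have "uncurry4 (A (B g)) p = dir_deriv a (uncurry4 (B g)) p" using A[OF Bg p] .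
  also have "\<dots> = dir_deriv a (dir_deriv b (uncurry4 g)) p"
    using dir_deriv_cong[OF U p _ smooth_on_dir_deriv[OF U g]] B[OF g] by blast
  also have "\<dots> = dir_deriv b (dir_deriv a (uncurry4 g)) p" using dir_deriv_commute[OF U g p] .
  also have "\<dots> = dir_deriv b (uncurry4 (A g)) p"
    using dir_deriv_cong[OF U p _ smooth_on_dir_deriv[OF U g]] A[OF g] by (metis (no_types, lifting))
  also have "\<dots> = uncurry4 (B (A g)) p" using B[OF Ag p] by simp
  finally show ?thesis .
qed

lemma dZ_commute:
  assumes "open U" "smooth_on U (uncurry4 g)" "(x, y, z, t) \<in> U"
  shows "dZ (dX g) x y z t = dX (dZ g) x y z t"
    and "dZ (dY g) x y z t = dY (dZ g) x y z t"
    and "dZ (dT g) x y z t = dT (dZ g) x y z t"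
  using partials_commute[OF assms partials_eq_dir_deriv(3) partials_eq_dir_deriv(1)]
    partials_commute[OF assms partials_eq_dir_deriv(3) partials_eq_dir_deriv(2)]
    partials_commute[OF assms partials_eq_dir_deriv(3) partials_eq_dir_deriv(4)]
  by simp_all

lemma has_vector_derivative_unique_on_interval:
  fixes f g :: "real \<Rightarrow> 'a::real_normed_vector"
  assumes "a < b" "c \<in> {a..b}" "\<forall>s\<in>{a..b}. f s = g s"
    and f: "(f has_vector_derivative f') (at c)" and g: "(g has_vector_derivative g') (at c)"
  shows "f' = g'"
proof -
  have f_within: "(f has_vector_derivative f') (at c within cbox a b)"
    using has_vector_derivative_at_within[OF f] .
  have "(g has_vector_derivative g') (at c within cbox a b)"
    using has_vector_derivative_at_within[OF g] .
  then have "(f has_vector_derivative g') (at c within cbox a b)"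
    using has_vector_derivative_transform[of c "cbox a b" f g g'] assms(2,3) by auto
  then show ?thesis
    using vector_derivative_unique_within_closed_interval[OF assms(1) _ f_within] assms(2) by auto
qed

definition vanishes_on_zface :: "real \<Rightarrow> real \<Rightarrow> field4 \<Rightarrow> bool" where
  "vanishes_on_zface T z0 g \<longleftrightarrow> (\<forall>x\<in>{0..1}. \<forall>y\<in>{0..1}. \<forall>t\<in>{0<..T}. g x y z0 t = 0)"

lemma vanishes_on_zface_tangential:
  assumes g: "smooth_on U (uncurry4 g)"
    and face: "\<forall>x\<in>{0..1}. \<forall>y\<in>{0..1}. \<forall>t\<in>{0<..T}. (x, y, z0, t) \<in> U"
    and "vanishes_on_zface T z0 g"
  shows "vanishes_on_zface T z0 (dX g)" and "vanishes_on_zface T z0 (dY g)"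
    and "vanishes_on_zface T z0 (dT g)"
proof -
  have zero: "g x y z0 t = 0" if "x \<in> {0..1}" "y \<in> {0..1}" "t \<in> {0<..T}" for x y t
    using assms(3) that unfolding vanishes_on_zface_def by blast
  note deriv = partials_has_vector_derivative[OF g face[rule_format]]
  have "dX g x y z0 t = 0 \<and> dY g x y z0 t = 0 \<and> dT g x y z0 t = 0"
    if xyt: "x \<in> {0..1}" "y \<in> {0..1}" "t \<in> {0<..T}" for x y t :: real
  proof (intro conjI)
    show "dX g x y z0 t = 0"
      by (rule has_vector_derivative_unique_on_interval[OF zero_less_one _ _ deriv(1)[OF xyt]
            has_vector_derivative_const]) (use xyt zero in auto)
    show "dY g x y z0 t = 0"
      by (rule has_vector_derivative_unique_on_interval[OF zero_less_one _ _ deriv(2)[OF xyt]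
            has_vector_derivative_const]) (use xyt zero in auto)
    show "dT g x y z0 t = 0"
      by (rule has_vector_derivative_unique_on_interval[of "t / 2" T, OF _ _ _ deriv(4)[OF xyt]
            has_vector_derivative_const]) (use xyt zero in auto)
  qed
  then show "vanishes_on_zface T z0 (dX g)" "vanishes_on_zface T z0 (dY g)"
    "vanishes_on_zface T z0 (dT g)"
    unfolding vanishes_on_zface_def by blast+
qed

lemma neumann_zface_mixed_partials:
  assumes U: "open U" and m: "smooth_on U (uncurry4 m)"
    and face: "\<forall>x\<in>{0..1}. \<forall>y\<in>{0..1}. \<forall>t\<in>{0<..T}. (x, y, z0, t) \<in> U"
    and neumann: "vanishes_on_zface T z0 (dZ m)"
  shows "vanishes_on_zface T z0 (dZ (dX m))" and "vanishes_on_zface T z0 (dZ (dY m))"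
    and "vanishes_on_zface T z0 (dZ (dT m))" and "vanishes_on_zface T z0 (dZ (dX (dX m)))"
    and "vanishes_on_zface T z0 (dZ (dY (dY m)))"
proof -
  have commuted: "vanishes_on_zface T z0 (dZ (dX g)) \<and> vanishes_on_zface T z0 (dZ (dY g))
      \<and> vanishes_on_zface T z0 (dZ (dT g))"
    if "smooth_on U (uncurry4 g)" "vanishes_on_zface T z0 (dZ g)" for g
    using vanishes_on_zface_tangential[OF smooth_on_partials(3)[OF U that(1)] face that(2)]
      dZ_commute[OF U that(1) face[rule_format]]
    unfolding vanishes_on_zface_def by simp
  then show "vanishes_on_zface T z0 (dZ (dX m))" "vanishes_on_zface T z0 (dZ (dY m))"
    "vanishes_on_zface T z0 (dZ (dT m))"
    using m neumann by blast+
  then show "vanishes_on_zface T z0 (dZ (dX (dX m)))" "vanishes_on_zface T z0 (dZ (dY (dY m)))"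
    using commuted smooth_on_partials[OF U m] by blast+
qed

lemma cross3_eq_scaleR_imp_zero:
  fixes a v :: "real^3"
  assumes "\<alpha> > 0" "\<alpha> *\<^sub>R v = cross3 a v"
  shows "v = 0"
proof -
  have "\<alpha> * (v \<bullet> v) = v \<bullet> cross3 a v" using arg_cong[OF assms(2), of "\<lambda>w. v \<bullet> w"] by simp
  also have "\<dots> = 0" by (rule dot_cross_self(2))
  finally show ?thesis using assms(1) by simp
qed

lemma has_real_derivative_norm_sq:
  assumes "(f has_vector_derivative f') (at s)"
  shows "((\<lambda>s. (norm (f s))\<^sup>2) has_real_derivative 2 * (f s \<bullet> f')) (at s)"
proof -
  have "((\<lambda>s. f s \<bullet> f s) has_vector_derivative (f s \<bullet> f' + f' \<bullet> f s)) (at s)"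
    using bounded_bilinear.has_vector_derivative[OF bounded_bilinear_inner assms assms] .
  then show ?thesis
    by (simp add: power2_norm_eq_inner has_real_derivative_iff_has_vector_derivative inner_commute)
qed

lemma has_vector_derivative_llg_rhs:
  fixes M L :: "real \<Rightarrow> real^3" and G :: "real \<Rightarrow> real"
  assumes M: "(M has_vector_derivative 0) (at s)" and L: "(L has_vector_derivative v) (at s)"
    and G: "(G has_real_derivative 0) (at s)"
  shows "((\<lambda>s. - cross3 (M s) (L s) + \<alpha> *\<^sub>R L s + (\<alpha> * G s) *\<^sub>R M s)
           has_vector_derivative \<alpha> *\<^sub>R v - cross3 (M s) v) (at s)"
proof -
  have "bounded_bilinear cross3" using bilinear_cross bilinear_conv_bounded_bilinear by blast
  then have "((\<lambda>s. - cross3 (M s) (L s) + \<alpha> *\<^sub>R L s + (\<alpha> * G s) *\<^sub>R M s) has_vector_derivative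
      - (cross3 (M s) v + cross3 0 (L s)) + (\<alpha> *\<^sub>R v + 0 *\<^sub>R L s)
      + ((\<alpha> * G s) *\<^sub>R 0 + (\<alpha> * 0) *\<^sub>R M s)) (at s)"
    by (intro has_vector_derivative_add has_vector_derivative_minus
        bounded_bilinear.has_vector_derivative[OF _ M L]
        has_vector_derivative_scaleR[OF DERIV_const L]
        has_vector_derivative_scaleR[OF DERIV_cmult[OF G] M])
  then show ?thesis by simp
qed

definition llg_solution :: "real \<Rightarrow> real \<Rightarrow> (real \<times> real \<times> real \<times> real) set \<Rightarrow> field4 \<Rightarrow> bool" where
  "llg_solution \<alpha> T U m \<longleftrightarrow> open U
     \<and> (\<forall>x y z t. (x, y, z) \<in> unit_cube \<and> t \<in> {0<..T} \<longrightarrow> (x, y, z, t) \<in> U)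
     \<and> smooth_on U (uncurry4 m)
     \<and> (\<forall>x y z t. (x, y, z) \<in> unit_cube \<and> t \<in> {0<..T} \<longrightarrow>
          dT m x y z t = - cross3 (m x y z t) (lap m x y z t) + \<alpha> *\<^sub>R lap m x y z t
                         + (\<alpha> * grad_sq m x y z t) *\<^sub>R m x y z t)"

lemma llg_solutionD:
  assumes "llg_solution \<alpha> T U m"
  shows "open U" and "smooth_on U (uncurry4 m)"
    and "(x, y, z) \<in> unit_cube \<Longrightarrow> t \<in> {0<..T} \<Longrightarrow> (x, y, z, t) \<in> U"
    and "(x, y, z) \<in> unit_cube \<Longrightarrow> t \<in> {0<..T} \<Longrightarrow>
      dT m x y z t = - cross3 (m x y z t) (lap m x y z t) + \<alpha> *\<^sub>R lap m x y z t
                     + (\<alpha> * grad_sq m x y z t) *\<^sub>R m x y z t"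
  using assms unfolding llg_solution_def by blast+

lemma llg_neumann_zface_dZ3:
  assumes sol: "llg_solution \<alpha> T U m" and \<alpha>: "\<alpha> > 0" and z0: "z0 \<in> {0..1}"
    and neumann: "vanishes_on_zface T z0 (dZ m)"
  shows "vanishes_on_zface T z0 (dZ (dZ (dZ m)))"
  unfolding vanishes_on_zface_def
proof (intro ballI)
  fix x y t :: real assume xyt: "x \<in> {0..1}" "y \<in> {0..1}" "t \<in> {0<..T}"
  note U = llg_solutionD(1)[OF sol] and m = llg_solutionD(2)[OF sol]
  have face: "\<forall>x\<in>{0..1}. \<forall>y\<in>{0..1}. \<forall>t\<in>{0<..T}. (x, y, z0, t) \<in> U"
    using llg_solutionD(3)[OF sol] z0 by (auto simp: unit_cube_def)
  have p: "(x, y, z0, t) \<in> U" using face xyt by blast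
  have vanish: "dZ m x y z0 t = 0" "dZ (dX m) x y z0 t = 0" "dZ (dY m) x y z0 t = 0"
    "dZ (dT m) x y z0 t = 0" "dZ (dX (dX m)) x y z0 t = 0" "dZ (dY (dY m)) x y z0 t = 0"
    using neumann neumann_zface_mixed_partials[OF U m face neumann] xyt
    unfolding vanishes_on_zface_def by blast+
  note sm = smooth_on_partials[OF U m]
    smooth_on_partials(1)[OF U smooth_on_partials(1)[OF U m]]
    smooth_on_partials(2)[OF U smooth_on_partials(2)[OF U m]]
    smooth_on_partials(3)[OF U smooth_on_partials(3)[OF U m]]
  note dz = partials_has_vector_derivative(3)[OF _ p]
  define v where "v = dZ (dZ (dZ m)) x y z0 t"
  have dM: "((\<lambda>s. m x y s t) has_vector_derivative 0) (at z0)"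
    using dz[OF m] vanish by simp
  have "((\<lambda>s. lap m x y s t) has_vector_derivative
      dZ (dX (dX m)) x y z0 t + dZ (dY (dY m)) x y z0 t + v) (at z0)"
    unfolding lap_def v_def by (intro has_vector_derivative_add dz sm)
  then have dL: "((\<lambda>s. lap m x y s t) has_vector_derivative v) (at z0)"
    using vanish by simp
  have "((\<lambda>s. grad_sq m x y s t) has_real_derivative
      2 * (dX m x y z0 t \<bullet> dZ (dX m) x y z0 t) + 2 * (dY m x y z0 t \<bullet> dZ (dY m) x y z0 t)
      + 2 * (dZ m x y z0 t \<bullet> dZ (dZ m) x y z0 t)) (at z0)"
    unfolding grad_sq_def by (intro DERIV_add has_real_derivative_norm_sq dz sm)
  then have dG: "((\<lambda>s. grad_sq m x y s t) has_real_derivative 0) (at z0)"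
    using vanish by simp
  have dLHS: "((\<lambda>s. dT m x y s t) has_vector_derivative 0) (at z0)"
    using dz[OF sm(4)] vanish by simp
  have "0 = \<alpha> *\<^sub>R v - cross3 (m x y z0 t) v"
    by (rule has_vector_derivative_unique_on_interval[OF zero_less_one z0 _ dLHS
          has_vector_derivative_llg_rhs[OF dM dL dG]])
      (use llg_solutionD(4)[OF sol] xyt in \<open>auto simp: unit_cube_def\<close>)
  then show "dZ (dZ (dZ m)) x y z0 t = 0"
    using cross3_eq_scaleR_imp_zero[OF \<alpha>] unfolding v_def by simp
qed

definition swap_xz :: "field4 \<Rightarrow> field4" where
  "swap_xz m = (\<lambda>x y z t. m z y x t)"

definition swap_yz :: "field4 \<Rightarrow> field4" where
  "swap_yz m = (\<lambda>x y z t. m x z y t)"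

lemma partials_swap_xz:
  "dX (swap_xz m) = swap_xz (dZ m)" "dY (swap_xz m) = swap_xz (dY m)"
  "dZ (swap_xz m) = swap_xz (dX m)" "dT (swap_xz m) = swap_xz (dT m)"
  by (simp_all add: swap_xz_def dX_def dY_def dZ_def dT_def)

lemma partials_swap_yz:
  "dX (swap_yz m) = swap_yz (dX m)" "dY (swap_yz m) = swap_yz (dZ m)"
  "dZ (swap_yz m) = swap_yz (dY m)" "dT (swap_yz m) = swap_yz (dT m)"
  by (simp_all add: swap_yz_def dX_def dY_def dZ_def dT_def)

lemma llg_solution_swap_xz:
  assumes "llg_solution \<alpha> T U m"
  shows "llg_solution \<alpha> T ((\<lambda>(x, y, z, t). (z, y, x, t)) -` U) (swap_xz m)"
proof -
  let ?P = "\<lambda>(x::real, y::real, z::real, t::real). (z, y, x, t)"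
  have P: "bounded_linear ?P" unfolding split_beta by (intro bounded_linear_intros)
  have "uncurry4 (swap_xz m) = uncurry4 m \<circ> ?P" by (auto simp: swap_xz_def)
  moreover note llg_solutionD(2)[OF assms]
  ultimately have "smooth_on (?P -` U) (uncurry4 (swap_xz m))"
    using smooth_on_compose_linear[OF P] by simp
  moreover have "(x, y, z) \<in> unit_cube \<longleftrightarrow> (z, y, x) \<in> unit_cube" for x y z :: real
    by (auto simp: unit_cube_def)
  ultimately show ?thesis
    using assms open_vimage[OF _ linear_continuous_on[OF P]]
    unfolding llg_solution_def lap_def grad_sq_def partials_swap_xz
    by (simp add: swap_xz_def add_ac)
qed

lemma llg_solution_swap_yz:
  assumes "llg_solution \<alpha> T U m"
  shows "llg_solution \<alpha> T ((\<lambda>(x, y, z, t). (x, z, y, t)) -` U) (swap_yz m)"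
proof -
  let ?P = "\<lambda>(x::real, y::real, z::real, t::real). (x, z, y, t)"
  have P: "bounded_linear ?P" unfolding split_beta by (intro bounded_linear_intros)
  have "uncurry4 (swap_yz m) = uncurry4 m \<circ> ?P" by (auto simp: swap_yz_def)
  moreover note llg_solutionD(2)[OF assms]
  ultimately have "smooth_on (?P -` U) (uncurry4 (swap_yz m))"
    using smooth_on_compose_linear[OF P] by simp
  moreover have "(x, y, z) \<in> unit_cube \<longleftrightarrow> (x, z, y) \<in> unit_cube" for x y z :: real
    by (auto simp: unit_cube_def)
  ultimately show ?thesis
    using assms open_vimage[OF _ linear_continuous_on[OF P]]
    unfolding llg_solution_def lap_def grad_sq_def partials_swap_yz
    by (simp add: swap_yz_def add_ac)
qed

lemma llg_neumann_xface_dX3: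
  assumes "llg_solution \<alpha> T U m" "\<alpha> > 0" "x0 \<in> {0..1}"
    and "\<forall>y\<in>{0..1}. \<forall>z\<in>{0..1}. \<forall>t\<in>{0<..T}. dX m x0 y z t = 0"
  shows "\<forall>y\<in>{0..1}. \<forall>z\<in>{0..1}. \<forall>t\<in>{0<..T}. dX (dX (dX m)) x0 y z t = 0"
proof -
  have "vanishes_on_zface T x0 (dZ (swap_xz m))"
    using assms(4) unfolding vanishes_on_zface_def partials_swap_xz by (simp add: swap_xz_def)
  from llg_neumann_zface_dZ3[OF llg_solution_swap_xz[OF assms(1)] assms(2,3) this]
  show ?thesis unfolding vanishes_on_zface_def partials_swap_xz by (simp add: swap_xz_def)
qed

lemma llg_neumann_yface_dY3:
  assumes "llg_solution \<alpha> T U m" "\<alpha> > 0" "y0 \<in> {0..1}"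
    and "\<forall>x\<in>{0..1}. \<forall>z\<in>{0..1}. \<forall>t\<in>{0<..T}. dY m x y0 z t = 0"
  shows "\<forall>x\<in>{0..1}. \<forall>z\<in>{0..1}. \<forall>t\<in>{0<..T}. dY (dY (dY m)) x y0 z t = 0"
proof -
  have "vanishes_on_zface T y0 (dZ (swap_yz m))"
    using assms(4) unfolding vanishes_on_zface_def partials_swap_yz by (simp add: swap_yz_def)
  from llg_neumann_zface_dZ3[OF llg_solution_swap_yz[OF assms(1)] assms(2,3) this]
  show ?thesis unfolding vanishes_on_zface_def partials_swap_yz by (simp add: swap_yz_def)
qed

lemma norm_le_power_by_derivative_bound:
  fixes \<psi> \<psi>' :: "real \<Rightarrow> 'a::real_inner"
  assumes C: "0 \<le> C" and zero: "\<psi> 0 = 0"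
    and deriv: "\<forall>s\<in>{0..\<delta>}. (\<psi> has_vector_derivative \<psi>' s) (at s)"
    and bound: "\<forall>s\<in>{0..\<delta>}. norm (\<psi>' s) \<le> C * s ^ k"
    and s: "s \<in> {0..\<delta>}"
  shows "norm (\<psi> s) \<le> C * s ^ Suc k"
proof (cases "s = 0")
  case True
  then show ?thesis using zero by simp
next
  case False
  then have "0 < s" using s by auto
  have cont: "continuous_on {0..s} \<psi>"
  proof (rule continuous_at_imp_continuous_on, rule ballI)
    fix u assume "u \<in> {0..s}"
    then have "u \<in> {0..\<delta>}" using s by auto
    then show "isCont \<psi> u" using deriv has_vector_derivative_continuous by blast
  qed
  have der: "\<And>u. 0 < u \<Longrightarrow> u < s \<Longrightarrow> (\<psi> has_derivative (\<lambda>h. h *\<^sub>R \<psi>' u)) (at u)"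
    using deriv s unfolding has_vector_derivative_def by auto
  obtain u where u: "u \<in> {0<..<s}" "norm (\<psi> s - \<psi> 0) \<le> norm ((s - 0) *\<^sub>R \<psi>' u)"
    using mvt_general[OF \<open>0 < s\<close> cont der] by blast
  have "u \<in> {0..\<delta>}" using u s by auto
  have "norm (\<psi> s) \<le> s * norm (\<psi>' u)" using u zero \<open>0 < s\<close> by simp
  also have "\<dots> \<le> s * (C * u ^ k)" using bound \<open>u \<in> {0..\<delta>}\<close> \<open>0 < s\<close> by (intro mult_left_mono) auto
  also have "\<dots> \<le> s * (C * s ^ k)"
    using u C \<open>0 < s\<close> by (intro mult_left_mono mult_left_mono power_mono) auto
  also have "\<dots> = C * s ^ Suc k" by simp
  finally show ?thesis .
qed

lemma iterated_derivative_bound: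
  fixes \<phi> :: "nat \<Rightarrow> real \<Rightarrow> 'a::real_inner"
  assumes C: "0 \<le> C" and "\<forall>j<n. \<phi> j 0 = 0"
    and "\<forall>j<n. \<forall>s\<in>{0..\<delta>}. (\<phi> j has_vector_derivative \<phi> (Suc j) s) (at s)"
    and "\<forall>s\<in>{0..\<delta>}. norm (\<phi> n s) \<le> C"
  shows "\<forall>s\<in>{0..\<delta>}. norm (\<phi> 0 s) \<le> C * s ^ n"
  using assms(2-)
proof (induction n arbitrary: \<phi>)
  case 0
  then show ?case by simp
next
  case (Suc n)
  have "\<forall>j<n. \<phi> (Suc j) 0 = 0"
    and "\<forall>j<n. \<forall>s\<in>{0..\<delta>}. (\<phi> (Suc j) has_vector_derivative \<phi> (Suc (Suc j)) s) (at s)"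
    using Suc.prems(1,2) by simp_all
  then have IH: "\<forall>s\<in>{0..\<delta>}. norm (\<phi> 1 s) \<le> C * s ^ n"
    using Suc.IH[of "\<lambda>j. \<phi> (Suc j)"] Suc.prems(3) by simp
  have "\<phi> 0 0 = 0" "\<forall>s\<in>{0..\<delta>}. (\<phi> 0 has_vector_derivative \<phi> 1 s) (at s)"
    using Suc.prems(1,2) by simp_all
  then show ?case using norm_le_power_by_derivative_bound[OF C _ _ IH] by blast
qed

lemma reflection_difference_bigo:
  fixes f :: "nat \<Rightarrow> real \<Rightarrow> 'a::real_inner"
  assumes \<delta>: "\<delta> > 0"
    and deriv: "\<forall>j<n. \<forall>s. \<bar>s\<bar> \<le> \<delta> \<longrightarrow> (f j has_vector_derivative f (Suc j) s) (at s)"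
    and cont: "continuous_on {-\<delta>..\<delta>} (f n)"
    and odd_zero: "\<forall>j<n. odd j \<longrightarrow> f j 0 = 0"
  shows "(\<lambda>h. norm (f 0 (- h / 2) - f 0 (h / 2))) \<in> O[at_right 0](\<lambda>h. h ^ n)"
proof -
  define \<phi> where "\<phi> j s = f j s - (-1) ^ j *\<^sub>R f j (- s)" for j s
  have "\<forall>j<n. \<phi> j 0 = 0"
    using odd_zero by (auto simp: \<phi>_def elim: oddE)
  moreover have "\<forall>j<n. \<forall>s\<in>{0..\<delta>}. (\<phi> j has_vector_derivative \<phi> (Suc j) s) (at s)"
  proof (intro allI impI ballI)
    fix j s assume j: "j < n" and s: "s \<in> {0..\<delta>}"
    have "((\<lambda>s. - s) has_vector_derivative - 1) (at s)"
      using has_vector_derivative_minus[OF has_vector_derivative_id] .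
    then have "((f j \<circ> (\<lambda>s. - s)) has_vector_derivative (- 1) *\<^sub>R f (Suc j) (- s)) (at s)"
      by (rule vector_diff_chain_at) (use deriv j s in auto)
    then have "((\<lambda>s. f j (- s)) has_vector_derivative - f (Suc j) (- s)) (at s)"
      by (simp add: o_def)
    from has_vector_derivative_diff[OF deriv[rule_format, OF j] has_vector_derivative_scaleR[OF DERIV_const this]]
    show "(\<phi> j has_vector_derivative \<phi> (Suc j) s) (at s)"
      using s unfolding \<phi>_def by (simp add: algebra_simps)
  qed
  moreover obtain C where C: "0 \<le> C" "\<forall>s\<in>{0..\<delta>}. norm (\<phi> n s) \<le> C"
  proof -
    have "continuous_on {0..\<delta>} (\<phi> n)"
      unfolding \<phi>_def
      by (intro continuous_intros continuous_on_subset[OF cont] continuous_on_compose2[OF cont]) auto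
    then have "bounded (\<phi> n ` {0..\<delta>})"
      by (intro compact_imp_bounded compact_continuous_image) auto
    then obtain B where "\<forall>s\<in>{0..\<delta>}. norm (\<phi> n s) \<le> B" by (auto simp: bounded_iff)
    then show ?thesis using that[of "max B 0"] by fastforce
  qed
  ultimately have bound: "\<forall>s\<in>{0..\<delta>}. norm (\<phi> 0 s) \<le> C * s ^ n"
    using iterated_derivative_bound[OF C(1)] C(2) by blast
  show ?thesis
  proof (rule bigoI[where c = C], unfold eventually_at_right_field, intro exI conjI allI impI)
    show "(0::real) < 2 * \<delta>" using \<delta> by simp
    fix h :: real assume h: "0 < h" "h < 2 * \<delta>"
    have "norm (f 0 (- h / 2) - f 0 (h / 2)) = norm (\<phi> 0 (h / 2))"
      by (simp add: \<phi>_def norm_minus_commute)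
    also have "\<dots> \<le> C * (h / 2) ^ n" using bound h by auto
    also have "\<dots> \<le> C * h ^ n" using h C(1) by (intro mult_left_mono power_mono) auto
    finally show "norm (norm (f 0 (- h / 2) - f 0 (h / 2))) \<le> C * norm (h ^ n)"
      using h by simp
  qed
qed

lemma neumann_reflection_bigo:
  assumes U: "open U" and m: "smooth_on U (uncurry4 m)" and p: "(x, y, 0, t) \<in> U"
    and dZ1: "dZ m x y 0 t = 0" and dZ3: "dZ (dZ (dZ m)) x y 0 t = 0"
  shows "(\<lambda>h. norm (m x y (- h / 2) t - m x y (h / 2) t)) \<in> O[at_right 0](\<lambda>h. h ^ 5)"
proof -
  obtain r where r: "r > 0" "\<And>s u. \<bar>s\<bar> < r \<Longrightarrow> \<bar>u\<bar> < r \<Longrightarrow>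
      (x, y, 0, t) + s *\<^sub>R (0, 0, 1, 0) + u *\<^sub>R 0 \<in> U"
    using open_contains_plane_square[OF U p] by blast
  have inU: "(x, y, s, t) \<in> U" if "\<bar>s\<bar> \<le> r / 2" for s
    using r(2)[of s 0] r(1) that by simp
  have smooth: "smooth_on U (uncurry4 ((dZ ^^ j) m))" for j
    by (induction j) (simp_all add: m smooth_on_partials(3)[OF U])
  define F where "F j = (\<lambda>s. (dZ ^^ j) m x y s t)" for j
  have deriv: "(F j has_vector_derivative F (Suc j) s) (at s)" if "\<bar>s\<bar> \<le> r / 2" for j s
    using partials_has_vector_derivative(3)[OF smooth inU[OF that]] by (simp add: F_def)
  have "(\<lambda>h. norm (F 0 (- h / 2) - F 0 (h / 2))) \<in> O[at_right 0](\<lambda>h. h ^ 5)"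
  proof (rule reflection_difference_bigo)
    show "continuous_on {- (r / 2)..r / 2} (F 5)"
      using has_vector_derivative_continuous[OF deriv]
      by (intro continuous_at_imp_continuous_on ballI) auto
    show "\<forall>j<5. odd j \<longrightarrow> F j 0 = 0"
    proof (intro allI impI)
      fix j :: nat assume "j < 5" "odd j"
      then have "j = 1 \<or> j = 3" by presburger
      then show "F j 0 = 0" using dZ1 dZ3 by (auto simp: F_def numeral_3_eq_3)
    qed
  qed (use r(1) deriv in auto)
  then show ?thesis by (simp add: F_def)
qed

theorem mainTheorem5:
  fixes m :: field4 and \<alpha> T :: real and U :: "(real \<times> real \<times> real \<times> real) set"
  assumes alpha_pos: "\<alpha> > 0" and T_pos: "T > 0"
    and U_open: "open U"
    and U_cover: "\<forall>x y z t. (x, y, z) \<in> unit_cube \<and> t \<in> {0<..T} \<longrightarrow> (x, y, z, t) \<in> U"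
    and smooth: "smooth_on U (\<lambda>(x, y, z, t). m x y z t)"
    and LLG: "\<forall>x y z t. (x, y, z) \<in> unit_cube \<and> t \<in> {0<..T} \<longrightarrow>
         dT m x y z t = - cross3 (m x y z t) (lap m x y z t) + \<alpha> *\<^sub>R lap m x y z t
                        + (\<alpha> * grad_sq m x y z t) *\<^sub>R m x y z t"
    and neumann_x: "\<forall>y z t. y \<in> {0..1} \<and> z \<in> {0..1} \<and> t \<in> {0<..T} \<longrightarrow>
         dX m 0 y z t = 0 \<and> dX m 1 y z t = 0"
    and neumann_y: "\<forall>x z t. x \<in> {0..1} \<and> z \<in> {0..1} \<and> t \<in> {0<..T} \<longrightarrow>
         dY m x 0 z t = 0 \<and> dY m x 1 z t = 0"
    and neumann_z: "\<forall>x y t. x \<in> {0..1} \<and> y \<in> {0..1} \<and> t \<in> {0<..T} \<longrightarrow>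
         dZ m x y 0 t = 0 \<and> dZ m x y 1 t = 0"
    and unit_len: "\<forall>x y z t. (x, y, z) \<in> unit_cube \<and> t \<in> {0<..T} \<longrightarrow> norm (m x y z t) = 1"
  shows "(\<forall>y z t. y \<in> {0..1} \<and> z \<in> {0..1} \<and> t \<in> {0<..T} \<longrightarrow>
            dX (dX (dX m)) 0 y z t = 0 \<and> dX (dX (dX m)) 1 y z t = 0)
       \<and> (\<forall>x z t. x \<in> {0..1} \<and> z \<in> {0..1} \<and> t \<in> {0<..T} \<longrightarrow>
            dY (dY (dY m)) x 0 z t = 0 \<and> dY (dY (dY m)) x 1 z t = 0)
       \<and> (\<forall>x y t. x \<in> {0..1} \<and> y \<in> {0..1} \<and> t \<in> {0<..T} \<longrightarrow>
            dZ (dZ (dZ m)) x y 0 t = 0 \<and> dZ (dZ (dZ m)) x y 1 t = 0)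
       \<and> (\<forall>x y t. x \<in> {0..1} \<and> y \<in> {0..1} \<and> t \<in> {0<..T} \<longrightarrow>
            (\<lambda>h. norm (m x y (- h / 2) t - m x y (h / 2) t)) \<in> O[at_right 0](\<lambda>h. h ^ 5))"
proof -
  have sol: "llg_solution \<alpha> T U m"
    unfolding llg_solution_def using U_open U_cover smooth LLG by blast
  have zface: "vanishes_on_zface T z0 (dZ (dZ (dZ m)))" if "z0 \<in> {0, 1}" for z0
  proof (rule llg_neumann_zface_dZ3[OF sol alpha_pos])
    show "z0 \<in> {0..1}" using that by auto
    show "vanishes_on_zface T z0 (dZ m)"
      using neumann_z that unfolding vanishes_on_zface_def by auto
  qed
  have xface: "\<forall>y\<in>{0..1}. \<forall>z\<in>{0..1}. \<forall>t\<in>{0<..T}. dX (dX (dX m)) x0 y z t = 0"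
    if "x0 \<in> {0, 1}" for x0
  proof (rule llg_neumann_xface_dX3[OF sol alpha_pos])
    show "x0 \<in> {0..1}" using that by auto
    show "\<forall>y\<in>{0..1}. \<forall>z\<in>{0..1}. \<forall>t\<in>{0<..T}. dX m x0 y z t = 0"
      using neumann_x that by auto
  qed
  have yface: "\<forall>x\<in>{0..1}. \<forall>z\<in>{0..1}. \<forall>t\<in>{0<..T}. dY (dY (dY m)) x y0 z t = 0"
    if "y0 \<in> {0, 1}" for y0
  proof (rule llg_neumann_yface_dY3[OF sol alpha_pos])
    show "y0 \<in> {0..1}" using that by auto
    show "\<forall>x\<in>{0..1}. \<forall>z\<in>{0..1}. \<forall>t\<in>{0<..T}. dY m x y0 z t = 0"
      using neumann_y that by auto
  qed
  have reflection: "(\<lambda>h. norm (m x y (- h / 2) t - m x y (h / 2) t)) \<in> O[at_right 0](\<lambda>h. h ^ 5)"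
    if "x \<in> {0..1}" "y \<in> {0..1}" "t \<in> {0<..T}" for x y t
  proof (rule neumann_reflection_bigo[OF U_open smooth])
    show "(x, y, 0, t) \<in> U" using U_cover that by (auto simp: unit_cube_def)
    show "dZ m x y 0 t = 0" using neumann_z that by blast
    show "dZ (dZ (dZ m)) x y 0 t = 0" using zface[of 0] that unfolding vanishes_on_zface_def by blast
  qed
  show ?thesis
    using xface[of 0] xface[of 1] yface[of 0] yface[of 1] zface[of 0] zface[of 1] reflection
    unfolding vanishes_on_zface_def by simp
qed

end
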